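(* Let $(X,d)$ be a compact metric space and $f:X\to X$ a cw-expansive homeomorphism with cw-expansivity constant $\alpha>0$. For $\varepsilon>0$ let $N_\varepsilon>0$ be an integer such that $\max_{|n|\le N_\varepsilon}\operatorname{diam} f^n(C)>\alpha$ for every continuum $C\subset X$ with $\operatorname{diam}C\ge\varepsilon$ (such $N_\varepsilon$ exists). Then for every $x\in X$, every $0<\varepsilon<\alpha/2$ and every integer $n\ge N_\varepsilon$: (1) $f^n\big(CW^s_{\alpha/2}(x)\big)\subset CW^s_\varepsilon(f^n(x))$; (2) $CW^s_\varepsilon(x)\subset W^s(x)$; (3) $CW^s_\varepsilon(x)$ equals the connected component of $W^s_{\alpha/2}(x)\cap W^s_{\varepsilon,n}(x)$ containing $x$.
   Context: A homeomorphism $f:X\to X$ of a compact metric space is continuum-wise expansive (cw-expansive) with cw-expansivity constant $\alpha>0$ if $\sup_{n\in\mathbb Z}\operatorname{diam} f^n(C)>\alpha$ for every continuum $C\subset X$ containing more than one point. For $\varepsilon>0$ and $x\in X$: $W^s_\varepsilon(x)=\{y\in X:\ d(f^k(x),f^k(y))\le\varepsilon \text{ for all } k\ge 0\}$; $CW^s_\varepsilon(x)$ is the connected component of $W^s_\varepsilon(x)$ containing $x$; $W^s(x)=\{y\in X:\ d(f^k(x),f^k(y))\to 0 \text{ as } k\to\infty\}$; for an integer $n\ge0$, $W^s_{\varepsilon,n}(x)=\{y\in X:\ d(f^r(x),f^r(y))\le\varepsilon \text{ for } r=0,\dots,n\}$. *)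

theory Defs
  imports "HOL-Analysis.Analysis"
begin

definition ipow :: "'a set \<Rightarrow> ('a \<Rightarrow> 'a) \<Rightarrow> int \<Rightarrow> 'a \<Rightarrow> 'a" where
  "ipow X f n = (if n \<ge> 0 then f ^^ nat n else inv_into X f ^^ nat (- n))"

definition continuum :: "'a::metric_space set \<Rightarrow> bool" where
  "continuum C \<longleftrightarrow> compact C \<and> connected C \<and> C \<noteq> {}"

definition cw_expansive :: "'a::metric_space set \<Rightarrow> ('a \<Rightarrow> 'a) \<Rightarrow> real \<Rightarrow> bool" where
  "cw_expansive X f \<alpha> \<longleftrightarrow> \<alpha> > 0 \<and>
     (\<forall>C. C \<subseteq> X \<and> continuum C \<and> (\<exists>a\<in>C. \<exists>b\<in>C. a \<noteq> b) \<longrightarrow>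
        (\<exists>n::int. diameter (ipow X f n ` C) > \<alpha>))"

definition Ws_loc :: "'a::metric_space set \<Rightarrow> ('a \<Rightarrow> 'a) \<Rightarrow> real \<Rightarrow> 'a \<Rightarrow> 'a set" where
  "Ws_loc X f \<epsilon> x = {y \<in> X. \<forall>k::nat. dist ((f ^^ k) x) ((f ^^ k) y) \<le> \<epsilon>}"

definition CWs_loc :: "'a::metric_space set \<Rightarrow> ('a \<Rightarrow> 'a) \<Rightarrow> real \<Rightarrow> 'a \<Rightarrow> 'a set" where
  "CWs_loc X f \<epsilon> x = connected_component_set (Ws_loc X f \<epsilon> x) x"

definition Ws :: "'a::metric_space set \<Rightarrow> ('a \<Rightarrow> 'a) \<Rightarrow> 'a \<Rightarrow> 'a set" where
  "Ws X f x = {y \<in> X. (\<lambda>k. dist ((f ^^ k) x) ((f ^^ k) y)) \<longlonglongrightarrow> 0}"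

definition Ws_fin :: "'a::metric_space set \<Rightarrow> ('a \<Rightarrow> 'a) \<Rightarrow> real \<Rightarrow> nat \<Rightarrow> 'a \<Rightarrow> 'a set" where
  "Ws_fin X f \<epsilon> n x = {y \<in> X. \<forall>r\<le>n. dist ((f ^^ r) x) ((f ^^ r) y) \<le> \<epsilon>}"

end

theory Submission
  imports Defs
begin

(* Let C = CW^s_{\<alpha>/2}(x). All forward images f^k(C) have diameter at most \<alpha>. If f^j(C) had
   diameter at least \<epsilon> for some j \<ge> N_\<epsilon>, some f^m with |m| \<le> N_\<epsilon> would expand it beyond \<alpha>;
   but f^m(f^j(C)) = f^(j+m)(C) is again a forward image. So beyond time N_\<epsilon> the points of C
   stay \<epsilon>-close to the orbit of x, which gives (1) and (3).
   For (2), if y \<in> CW^s_\<epsilon>(x) were not asymptotic to x, choose k_i with f^(k_i)(x) \<rightarrow> a and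
   f^(k_i)(y) \<rightarrow> b \<noteq> a. The upper limit of the continua f^(k_i)(CW^s_\<epsilon>(x)) is a continuum
   containing a and b whose every iterate lies within \<epsilon> of the corresponding iterate of a,
   so it is never expanded beyond 2\<epsilon> < \<alpha>, contradicting cw-expansivity. *)

lemma diameter_le_two_radius:
  fixes S :: "'a::metric_space set"
  assumes "S \<subseteq> cball c r" "0 \<le> r"
  shows "diameter S \<le> 2 * r"
proof (cases "S = {}")
  case False
  have "dist u v \<le> 2 * r" if "u \<in> S" "v \<in> S" for u v
  proof -
    have "dist c u \<le> r" "dist c v \<le> r"
      using assms(1) that by auto
    then show ?thesis
      using dist_triangle[of u v c] by (simp add: dist_commute)
  qed
  with False show ?thesis
    unfolding diameter_def by (auto intro!: cSUP_least)
qed (simp add: assms(2))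

lemma continuum_image:
  assumes "continuous_on C g" "continuum C"
  shows "continuum (g ` C)"
  using assms compact_continuous_image connected_continuous_image
  by (auto simp: continuum_def)

section \<open>Upper limits of sequences of sets\<close>

(* The Kuratowski upper limit: the points every neighbourhood of which meets infinitely many S i. *)
definition upper_limit :: "(nat \<Rightarrow> 'a::topological_space set) \<Rightarrow> 'a set" where
  "upper_limit S = (\<Inter>M. closure (\<Union>i\<in>{M..}. S i))"

lemma frequently_sequentially_subseq:
  assumes "frequently P sequentially"
  shows "\<exists>r :: nat \<Rightarrow> nat. strict_mono r \<and> (\<forall>n. P (r n))"
proof -
  have "infinite {i. P i}"
    using assms by (simp add: INFM_iff_infinite flip: cofinite_eq_sequentially)
  then show ?thesis
    using infinite_enumerate by (metis mem_Collect_eq)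
qed

lemma closed_upper_limit: "closed (upper_limit S)"
  by (simp add: upper_limit_def closed_INT)

lemma upper_limit_subset_closed:
  assumes "closed E" "eventually (\<lambda>i. S i \<subseteq> E) sequentially"
  shows "upper_limit S \<subseteq> E"
proof -
  obtain M where "\<And>i. i \<ge> M \<Longrightarrow> S i \<subseteq> E"
    using assms(2) by (auto simp: eventually_sequentially)
  then have "closure (\<Union>i\<in>{M..}. S i) \<subseteq> E"
    using assms(1) by (intro closure_minimal) auto
  then show ?thesis
    by (auto simp: upper_limit_def)
qed

lemma upper_limit_subset: "closed X \<Longrightarrow> (\<And>i. S i \<subseteq> X) \<Longrightarrow> upper_limit S \<subseteq> X"
  by (simp add: upper_limit_subset_closed)

lemma LIMSEQ_in_upper_limit:
  fixes S :: "nat \<Rightarrow> 'a::first_countable_topology set"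
  assumes "strict_mono r" "\<And>n. a n \<in> S (r n)" "a \<longlonglongrightarrow> p"
  shows "p \<in> upper_limit S"
  unfolding upper_limit_def
proof
  fix M
  have "a (n + M) \<in> (\<Union>i\<in>{M..}. S i)" for n
  proof -
    have "M \<le> r (n + M)"
      using seq_suble[OF assms(1), of "n + M"] by simp
    then show ?thesis
      using assms(2)[of "n + M"] by blast
  qed
  moreover have "(\<lambda>n. a (n + M)) \<longlonglongrightarrow> p"
    using assms(3) by (rule LIMSEQ_ignore_initial_segment)
  ultimately show "p \<in> closure (\<Union>i\<in>{M..}. S i)"
    by (meson closure_sequential)
qed

lemma upper_limit_meets_compact:
  fixes S :: "nat \<Rightarrow> 'a::metric_space set"
  assumes "compact F" "frequently (\<lambda>i. S i \<inter> F \<noteq> {}) sequentially"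
  shows "upper_limit S \<inter> F \<noteq> {}"
proof -
  obtain r :: "nat \<Rightarrow> nat" where r: "strict_mono r" "\<And>n. S (r n) \<inter> F \<noteq> {}"
    using frequently_sequentially_subseq[OF assms(2)] by auto
  then have "\<forall>n. \<exists>t. t \<in> S (r n) \<inter> F"
    by blast
  then obtain t where t: "\<And>n. t n \<in> S (r n) \<inter> F"
    by metis
  obtain z q where "z \<in> F" "strict_mono q" "(t \<circ> q) \<longlonglongrightarrow> z"
    using seq_compactE[OF compact_imp_seq_compact[OF assms(1)]] t by blast
  moreover have "z \<in> upper_limit S"
    using calculation t by (intro LIMSEQ_in_upper_limit[of "r \<circ> q" "t \<circ> q"])
      (auto intro: strict_mono_o r(1))
  ultimately show ?thesis
    by blast
qed

lemma connected_upper_limit: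
  fixes S :: "nat \<Rightarrow> 'a::metric_space set"
  assumes X: "compact X" "\<And>i. S i \<subseteq> X"
    and S: "\<And>i. connected (S i)" "\<And>i. a i \<in> S i" "a \<longlonglongrightarrow> p"
  shows "connected (upper_limit S)"
proof -
  have separated: False
    if AB: "closed A" "closed B" "A \<union> B = upper_limit S" "A \<inter> B = {}" "p \<in> A" "b \<in> B" for A B b
  proof -
    obtain U V where UV: "open U" "open V" "A \<subseteq> U" "B \<subseteq> V" "U \<inter> V = {}"
      using t4_space[OF AB(1,2,4)] by blast
    have "eventually (\<lambda>i. a i \<in> U) sequentially"
      using S(3) UV AB(5) by (auto simp: tendsto_def)
    then have ev: "eventually (\<lambda>i. S i \<inter> V \<noteq> {} \<longrightarrow> S i \<inter> (X - (U \<union> V)) \<noteq> {}) sequentially"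
    proof eventually_elim
      case (elim i)
      have "U \<inter> V \<inter> S i = {}"
        using UV(5) by blast
      with connectedD[OF S(1) UV(1,2)] have "S i \<subseteq> U \<union> V \<Longrightarrow> U \<inter> S i = {} \<or> V \<inter> S i = {}" .
      then show ?case
        using elim S(2)[of i] X(2)[of i] by blast
    qed
    have "frequently (\<lambda>i. S i \<inter> V \<noteq> {}) sequentially"
      unfolding frequently_sequentially
    proof
      fix M
      have "b \<in> closure (\<Union>i\<in>{M..}. S i)"
        using AB(3,6) by (auto simp: upper_limit_def)
      moreover have "b \<in> V"
        using UV(4) AB(6) by blast
      ultimately have "V \<inter> (\<Union>i\<in>{M..}. S i) \<noteq> {}"
        using open_Int_closure_eq_empty[OF UV(2)] by blast
      then show "\<exists>i\<ge>M. S i \<inter> V \<noteq> {}"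
        by auto
    qed
    then have "frequently (\<lambda>i. S i \<inter> (X - (U \<union> V)) \<noteq> {}) sequentially"
      by (rule frequently_mp[OF ev])
    moreover have "compact (X - (U \<union> V))"
      unfolding Diff_eq using X(1) UV(1,2) by (intro compact_Int_closed closed_Compl open_Un)
    ultimately have "upper_limit S \<inter> (X - (U \<union> V)) \<noteq> {}"
      by (intro upper_limit_meets_compact)
    then show False
      using AB(3) UV(3,4) by blast
  qed
  have "p \<in> upper_limit S"
    by (rule LIMSEQ_in_upper_limit[OF strict_mono_id _ S(3)]) (simp add: S(2))
  then show ?thesis
    unfolding connected_closed_set[OF closed_upper_limit]
  proof (intro notI, elim exE conjE)
    fix A B
    assume "closed A" "closed B" "A \<noteq> {}" "B \<noteq> {}" "A \<union> B = upper_limit S" "A \<inter> B = {}"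
    then show False
      using separated[of A B] separated[of B A] \<open>p \<in> upper_limit S\<close> by blast
  qed
qed

lemma compact_upper_limit:
  fixes S :: "nat \<Rightarrow> 'a::t2_space set"
  assumes "compact X" "\<And>i. S i \<subseteq> X"
  shows "compact (upper_limit S)"
proof -
  have "upper_limit S \<subseteq> X"
    using upper_limit_subset[OF compact_imp_closed[OF assms(1)]] assms(2) .
  then show ?thesis
    using compact_Int_closed[OF assms(1) closed_upper_limit[of S]] by (simp add: Int_absorb1)
qed

lemma upper_limit_dist_le:
  fixes S :: "nat \<Rightarrow> 'a::metric_space set" and g :: "'a \<Rightarrow> 'b::metric_space"
  assumes "closed X" "continuous_on X g" "\<And>i. S i \<subseteq> X"
    and "\<And>i. a i \<in> X" "a \<longlonglongrightarrow> p" "p \<in> X"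
    and "eventually (\<lambda>i. \<forall>s\<in>S i. dist (g s) (g (a i)) \<le> \<epsilon>) sequentially"
    and "z \<in> upper_limit S"
  shows "dist (g z) (g p) \<le> \<epsilon>"
proof (rule field_le_epsilon)
  fix \<delta> :: real
  assume "0 < \<delta>"
  have "(\<lambda>i. g (a i)) \<longlonglongrightarrow> g p"
    using continuous_on_tendsto_compose[OF assms(2,5,6)] assms(4) by simp
  then have "eventually (\<lambda>i. dist (g (a i)) (g p) < \<delta>) sequentially"
    using \<open>0 < \<delta>\<close> by (rule tendstoD)
  with assms(7) have "eventually (\<lambda>i. S i \<subseteq> X \<inter> g -` cball (g p) (\<epsilon> + \<delta>)) sequentially"
  proof eventually_elim
    case (elim i)
    show ?case
    proof
      fix s assume "s \<in> S i"
      then have "s \<in> X" "dist (g s) (g (a i)) \<le> \<epsilon>"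
        using assms(3) elim(1) by auto
      moreover have "dist (g p) (g s) \<le> dist (g s) (g (a i)) + dist (g (a i)) (g p)"
        using dist_triangle[of "g p" "g s" "g (a i)"] by (simp add: dist_commute)
      ultimately show "s \<in> X \<inter> g -` cball (g p) (\<epsilon> + \<delta>)"
        using elim(2) by simp
    qed
  qed
  moreover have "closed (X \<inter> g -` cball (g p) (\<epsilon> + \<delta>))"
    using continuous_closed_preimage[OF assms(2,1)] by simp
  ultimately have "g z \<in> cball (g p) (\<epsilon> + \<delta>)"
    using upper_limit_subset_closed assms(8) by blast
  then show "dist (g z) (g p) \<le> \<epsilon> + \<delta>"
    by (simp add: dist_commute)
qed

lemma funpow_in:
  assumes "f ` X \<subseteq> X" "x \<in> X"
  shows "(f ^^ k) x \<in> X"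
  using assms by (induction k) auto

lemma continuous_on_funpow:
  assumes "continuous_on X f" "f ` X \<subseteq> X"
  shows "continuous_on X (f ^^ k)"
proof (induction k)
  case (Suc k)
  have "continuous_on ((f ^^ k) ` X) f"
    using assms funpow_in[OF assms(2)] by (blast intro: continuous_on_subset)
  then show ?case
    using continuous_on_compose[OF Suc] by (simp add: comp_def)
qed simp

lemma funpow_inv_into_cancel:
  assumes "inj_on f X" "f ` X \<subseteq> X" "x \<in> X"
  shows "(inv_into X f ^^ k) ((f ^^ k) x) = x"
proof (induction k)
  case (Suc k)
  have "(inv_into X f ^^ Suc k) ((f ^^ Suc k) x) = (inv_into X f ^^ k) (inv_into X f ((f ^^ Suc k) x))"
    by (simp only: funpow_Suc_right comp_apply)
  also have "\<dots> = (inv_into X f ^^ k) ((f ^^ k) x)"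
    using inv_into_f_f[OF assms(1) funpow_in[OF assms(2,3)]] by simp
  also have "\<dots> = x"
    by (rule Suc)
  finally show ?case .
qed simp

lemma ipow_funpow:
  assumes "bij_betw f X X" "x \<in> X" "0 \<le> int k + m"
  shows "ipow X f m ((f ^^ k) x) = (f ^^ nat (int k + m)) x"
proof (cases "0 \<le> m")
  case True
  then have "nat (int k + m) = nat m + k"
    by simp
  with True show ?thesis
    by (simp add: ipow_def funpow_add)
next
  case False
  define l where "l = nat (int k + m)"
  have fX: "inj_on f X" "f ` X \<subseteq> X"
    using assms(1) by (auto simp: bij_betw_def)
  have "k = nat (- m) + l"
    using False assms(3) unfolding l_def by arith
  then have "(f ^^ k) x = (f ^^ nat (- m)) ((f ^^ l) x)"
    by (simp add: funpow_add)
  then show ?thesis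
    using False funpow_inv_into_cancel[OF fX funpow_in[OF fX(2) assms(2)]]
    by (simp add: ipow_def l_def)
qed

lemma ipow_image_funpow_image:
  assumes "bij_betw f X X" "C \<subseteq> X" "0 \<le> int k + m"
  shows "ipow X f m ` (f ^^ k) ` C = (f ^^ nat (int k + m)) ` C"
  using ipow_funpow[OF assms(1) _ assms(3)] assms(2) by (force simp: image_image)

lemma continuous_on_ipow:
  fixes X :: "'a::t2_space set"
  assumes "compact X" "continuous_on X f" "bij_betw f X X"
  shows "continuous_on X (ipow X f m)"
proof -
  have f: "inj_on f X" "f ` X = X"
    using assms(3) by (auto simp: bij_betw_def)
  then have "continuous_on X (inv_into X f)"
    using continuous_on_inv[OF assms(2,1), of "inv_into X f"] by simp
  moreover have "inv_into X f ` X \<subseteq> X"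
    using inv_into_into[of _ f X] f(2) by blast
  ultimately show ?thesis
    using continuous_on_funpow[of X f] continuous_on_funpow[of X "inv_into X f"] assms(2) f(2)
    by (simp add: ipow_def)
qed

lemma closed_Ws_loc:
  assumes "closed X" "continuous_on X f" "f ` X \<subseteq> X"
  shows "closed (Ws_loc X f r x)"
proof -
  have "Ws_loc X f r x = (\<Inter>k. X \<inter> (f ^^ k) -` cball ((f ^^ k) x) r)"
    by (auto simp: Ws_loc_def)
  then show ?thesis
    by (simp only:) (intro closed_INT ballI continuous_closed_preimage[OF continuous_on_funpow[OF assms(2,3)]
          assms(1)] closed_cball)
qed

lemma Ws_loc_mono: "r \<le> s \<Longrightarrow> Ws_loc X f r x \<subseteq> Ws_loc X f s x"
  by (auto simp: Ws_loc_def intro: order_trans)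

lemma CWs_loc_subset_Ws_loc: "CWs_loc X f r x \<subseteq> Ws_loc X f r x"
  by (simp add: CWs_loc_def connected_component_subset)

lemma CWs_loc_subset: "CWs_loc X f r x \<subseteq> X"
  using CWs_loc_subset_Ws_loc by (fastforce simp: Ws_loc_def)

lemma dist_funpow_CWs_loc: "y \<in> CWs_loc X f r x \<Longrightarrow> dist ((f ^^ k) x) ((f ^^ k) y) \<le> r"
  using CWs_loc_subset_Ws_loc by (fastforce simp: Ws_loc_def)

lemma centre_in_CWs_loc: "x \<in> X \<Longrightarrow> 0 \<le> r \<Longrightarrow> x \<in> CWs_loc X f r x"
  by (simp add: CWs_loc_def Ws_loc_def)

lemma centre_in_CWs_loc_if_nonempty: "y \<in> CWs_loc X f r x \<Longrightarrow> x \<in> CWs_loc X f r x"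
  by (auto simp: CWs_loc_def dest: connected_component_in intro: connected_component_refl)

lemma CWs_loc_radius_nonneg: "y \<in> CWs_loc X f r x \<Longrightarrow> 0 \<le> r"
  using dist_funpow_CWs_loc[of y X f r x 0] by (meson zero_le_dist order_trans)

lemma CWs_loc_maximal:
  "x \<in> T \<Longrightarrow> connected T \<Longrightarrow> T \<subseteq> Ws_loc X f r x \<Longrightarrow> T \<subseteq> CWs_loc X f r x"
  unfolding CWs_loc_def by (rule connected_component_maximal)

lemma continuum_CWs_loc:
  assumes "compact X" "continuous_on X f" "f ` X \<subseteq> X" "x \<in> X" "0 \<le> r"
  shows "continuum (CWs_loc X f r x)"
proof -
  have "closed (CWs_loc X f r x)"
    unfolding CWs_loc_def
    by (rule closed_connected_component[OF closed_Ws_loc]) (use assms compact_imp_closed in auto)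
  moreover have "X \<inter> CWs_loc X f r x = CWs_loc X f r x"
    using CWs_loc_subset by blast
  ultimately have "compact (CWs_loc X f r x)"
    using compact_Int_closed[OF assms(1)] by metis
  moreover have "connected (CWs_loc X f r x)"
    by (simp add: CWs_loc_def)
  ultimately show ?thesis
    using centre_in_CWs_loc[OF assms(4,5)] unfolding continuum_def by blast
qed

lemma diameter_funpow_image_CWs_loc:
  assumes "0 \<le> r"
  shows "diameter ((f ^^ k) ` CWs_loc X f r x) \<le> 2 * r"
  using dist_funpow_CWs_loc assms by (intro diameter_le_two_radius[of _ "(f ^^ k) x"]) auto

section \<open>Contraction of local stable continua\<close>

definition expansion_time :: "'a::metric_space set \<Rightarrow> ('a \<Rightarrow> 'a) \<Rightarrow> real \<Rightarrow> real \<Rightarrow> nat \<Rightarrow> bool" where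
  "expansion_time X f \<alpha> \<epsilon> N \<longleftrightarrow> (\<forall>C. C \<subseteq> X \<and> continuum C \<and> diameter C \<ge> \<epsilon> \<longrightarrow>
     (\<exists>m::int. \<bar>m\<bar> \<le> int N \<and> diameter (ipow X f m ` C) > \<alpha>))"

lemma diameter_funpow_image_less:
  assumes X: "compact X" "continuous_on X f" "bij_betw f X X"
    and N: "expansion_time X f \<alpha> \<epsilon> N" "N \<le> j"
    and C: "C \<subseteq> X" "continuum C" "\<And>k. diameter ((f ^^ k) ` C) \<le> \<alpha>"
  shows "diameter ((f ^^ j) ` C) < \<epsilon>"
proof (rule ccontr)
  assume "\<not> ?thesis"
  then have large: "diameter ((f ^^ j) ` C) \<ge> \<epsilon>"
    by simp
  have fX: "f ` X \<subseteq> X"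
    using X(3) by (simp add: bij_betw_def)
  have "(f ^^ j) ` C \<subseteq> X"
    using C(1) funpow_in[OF fX] by blast
  moreover have "continuum ((f ^^ j) ` C)"
    by (rule continuum_image[OF continuous_on_subset[OF continuous_on_funpow[OF X(2) fX] C(1)] C(2)])
  ultimately obtain m :: int where m: "\<bar>m\<bar> \<le> int N" "diameter (ipow X f m ` (f ^^ j) ` C) > \<alpha>"
    using N(1) large unfolding expansion_time_def by blast
  then have "ipow X f m ` (f ^^ j) ` C = (f ^^ nat (int j + m)) ` C"
    using N(2) by (intro ipow_image_funpow_image[OF X(3) C(1)]) linarith
  with m(2) C(3)[of "nat (int j + m)"] show False
    by simp
qed

lemma dist_funpow_CWs_loc_less:
  assumes X: "compact X" "continuous_on X f" "bij_betw f X X"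
    and N: "expansion_time X f \<alpha> \<epsilon> N" "N \<le> j"
    and y: "y \<in> CWs_loc X f (\<alpha> / 2) x"
  shows "dist ((f ^^ j) x) ((f ^^ j) y) < \<epsilon>"
proof -
  let ?C = "CWs_loc X f (\<alpha> / 2) x"
  have fX: "f ` X \<subseteq> X"
    using X(3) by (simp add: bij_betw_def)
  have x: "x \<in> ?C"
    using centre_in_CWs_loc_if_nonempty[OF y] .
  have r: "0 \<le> \<alpha> / 2"
    using CWs_loc_radius_nonneg[OF y] .
  have "continuum ?C"
    using continuum_CWs_loc[OF X(1,2) fX _ r] x CWs_loc_subset by blast
  moreover have "diameter ((f ^^ k) ` ?C) \<le> \<alpha>" for k
    using diameter_funpow_image_CWs_loc[OF r, where f = f and k = k and X = X and x = x] by simp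
  ultimately have "diameter ((f ^^ j) ` ?C) < \<epsilon>"
    by (rule diameter_funpow_image_less[OF X N CWs_loc_subset])
  moreover have "continuum ((f ^^ j) ` ?C)"
    by (rule continuum_image[OF continuous_on_subset[OF continuous_on_funpow[OF X(2) fX]
          CWs_loc_subset] \<open>continuum ?C\<close>])
  then have "dist ((f ^^ j) x) ((f ^^ j) y) \<le> diameter ((f ^^ j) ` ?C)"
    using x y by (intro diameter_bounded_bound compact_imp_bounded) (auto simp: continuum_def)
  ultimately show ?thesis
    by linarith
qed

lemma funpow_image_CWs_loc_subset:
  assumes X: "compact X" "continuous_on X f" "bij_betw f X X"
    and N: "expansion_time X f \<alpha> \<epsilon> N" "N \<le> n"
    and "x \<in> X" "0 \<le> \<alpha>"
  shows "(f ^^ n) ` CWs_loc X f (\<alpha> / 2) x \<subseteq> CWs_loc X f \<epsilon> ((f ^^ n) x)"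
proof (rule CWs_loc_maximal)
  let ?C = "CWs_loc X f (\<alpha> / 2) x"
  have fX: "f ` X \<subseteq> X"
    using X(3) by (simp add: bij_betw_def)
  show "(f ^^ n) x \<in> (f ^^ n) ` ?C"
    by (intro imageI centre_in_CWs_loc) (use assms(6,7) in auto)
  show "connected ((f ^^ n) ` ?C)"
    by (rule connected_continuous_image[OF continuous_on_subset[OF continuous_on_funpow[OF X(2) fX]
          CWs_loc_subset]]) (simp add: CWs_loc_def)
  show "(f ^^ n) ` ?C \<subseteq> Ws_loc X f \<epsilon> ((f ^^ n) x)"
  proof
    fix z assume "z \<in> (f ^^ n) ` ?C"
    then obtain y where y: "y \<in> ?C" "z = (f ^^ n) y"
      by blast
    have "y \<in> X"
      using y(1) CWs_loc_subset by blast
    have "dist ((f ^^ (k + n)) x) ((f ^^ (k + n)) y) < \<epsilon>" for k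
      using dist_funpow_CWs_loc_less[OF X N(1) _ y(1)] N(2) by simp
    then show "z \<in> Ws_loc X f \<epsilon> ((f ^^ n) x)"
      using y funpow_in[OF fX \<open>y \<in> X\<close>] by (auto simp: Ws_loc_def funpow_add less_imp_le)
  qed
qed

lemma CWs_loc_eq_connected_component_Ws_fin:
  assumes X: "compact X" "continuous_on X f" "bij_betw f X X"
    and N: "expansion_time X f \<alpha> \<epsilon> N" "N \<le> n"
    and "\<epsilon> \<le> \<alpha> / 2"
  shows "CWs_loc X f \<epsilon> x = connected_component_set (Ws_loc X f (\<alpha> / 2) x \<inter> Ws_fin X f \<epsilon> n x) x"
    (is "_ = ?D")
proof
  have "Ws_loc X f \<epsilon> x \<subseteq> Ws_fin X f \<epsilon> n x"
    by (auto simp: Ws_loc_def Ws_fin_def)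
  then have "Ws_loc X f \<epsilon> x \<subseteq> Ws_loc X f (\<alpha> / 2) x \<inter> Ws_fin X f \<epsilon> n x"
    using Ws_loc_mono[OF assms(6), of X f x] by blast
  then show "CWs_loc X f \<epsilon> x \<subseteq> ?D"
    unfolding CWs_loc_def by (rule connected_component_mono)
  show "?D \<subseteq> CWs_loc X f \<epsilon> x"
  proof (cases "?D = {}")
    case False
    then have x: "x \<in> ?D"
      by (auto dest: connected_component_in intro: connected_component_refl)
    then have CW: "?D \<subseteq> CWs_loc X f (\<alpha> / 2) x"
      using connected_component_subset by (intro CWs_loc_maximal) auto
    have "?D \<subseteq> Ws_loc X f \<epsilon> x"
    proof
      fix y assume "y \<in> ?D"
      then have y: "y \<in> Ws_fin X f \<epsilon> n x" "y \<in> CWs_loc X f (\<alpha> / 2) x"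
        using CW connected_component_subset by blast+
      have "dist ((f ^^ k) x) ((f ^^ k) y) \<le> \<epsilon>" for k
      proof (cases "k \<le> n")
        case False
        then show ?thesis
          using dist_funpow_CWs_loc_less[OF X N(1) _ y(2), of k] N(2) by simp
      qed (use y(1) in \<open>simp add: Ws_fin_def\<close>)
      then show "y \<in> Ws_loc X f \<epsilon> x"
        using y(1) by (simp add: Ws_fin_def Ws_loc_def)
    qed
    then show ?thesis
      using x by (intro CWs_loc_maximal) auto
  qed blast
qed

section \<open>Asymptotic behaviour\<close>

lemma not_in_Ws_convergent_subseqE:
  assumes "compact X" "f ` X \<subseteq> X" "x \<in> X" "y \<in> X" "y \<notin> Ws X f x"
  obtains r a b where "strict_mono r" "(\<lambda>i. (f ^^ r i) x) \<longlonglongrightarrow> a" "(\<lambda>i. (f ^^ r i) y) \<longlonglongrightarrow> b"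
    "a \<noteq> b"
proof -
  obtain \<delta> :: real where "0 < \<delta>"
    and "frequently (\<lambda>k. \<delta> \<le> dist ((f ^^ k) x) ((f ^^ k) y)) sequentially"
    using assms(4,5) by (auto simp: Ws_def tendsto_iff not_eventually not_less)
  then obtain r0 :: "nat \<Rightarrow> nat" where r0: "strict_mono r0"
    "\<And>n. \<delta> \<le> dist ((f ^^ r0 n) x) ((f ^^ r0 n) y)"
    using frequently_sequentially_subseq by blast
  define p where "p n = ((f ^^ r0 n) x, (f ^^ r0 n) y)" for n
  have "\<forall>n. p n \<in> X \<times> X"
    using funpow_in[OF assms(2)] assms(3,4) by (simp add: p_def)
  then obtain l q where q: "strict_mono q" "(p \<circ> q) \<longlonglongrightarrow> l"
    using seq_compactE[OF compact_imp_seq_compact[OF compact_Times[OF assms(1,1)]]] by metis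
  have a: "(\<lambda>i. (f ^^ (r0 \<circ> q) i) x) \<longlonglongrightarrow> fst l" and b: "(\<lambda>i. (f ^^ (r0 \<circ> q) i) y) \<longlonglongrightarrow> snd l"
    using tendsto_fst[OF q(2)] tendsto_snd[OF q(2)] by (simp_all add: p_def comp_def)
  have "\<delta> \<le> dist (fst l) (snd l)"
    using LIMSEQ_le_const[OF tendsto_dist[OF a b]] r0(2) by simp
  with \<open>0 < \<delta>\<close> have "fst l \<noteq> snd l"
    by auto
  then show ?thesis
    using that[OF strict_mono_o[OF r0(1) q(1)] a b] by blast
qed

lemma dist_ipow_funpow_CWs_loc:
  assumes "bij_betw f X X" "c \<in> CWs_loc X f r x" "0 \<le> int k + m"
  shows "dist (ipow X f m ((f ^^ k) c)) (ipow X f m ((f ^^ k) x)) \<le> r"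
proof -
  have "x \<in> X" "c \<in> X"
    using centre_in_CWs_loc_if_nonempty[OF assms(2)] assms(2) CWs_loc_subset by blast+
  then show ?thesis
    using dist_funpow_CWs_loc[OF assms(2)] ipow_funpow[OF assms(1) _ assms(3)]
    by (simp add: dist_commute)
qed

lemma diameter_ipow_upper_limit_le:
  assumes X: "compact X" "continuous_on X f" "bij_betw f X X"
    and "x \<in> X" "0 \<le> \<epsilon>" and r: "strict_mono r" and a: "(\<lambda>i. (f ^^ r i) x) \<longlonglongrightarrow> a"
  shows "diameter (ipow X f m ` upper_limit (\<lambda>i. (f ^^ r i) ` CWs_loc X f \<epsilon> x)) \<le> 2 * \<epsilon>"
proof -
  define S where "S i = (f ^^ r i) ` CWs_loc X f \<epsilon> x" for i
  have fX: "f ` X \<subseteq> X"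
    using X(3) by (simp add: bij_betw_def)
  have SX: "S i \<subseteq> X" for i
    using CWs_loc_subset funpow_in[OF fX] by (fastforce simp: S_def)
  have "a \<in> upper_limit S"
    by (rule LIMSEQ_in_upper_limit[OF strict_mono_id _ a])
      (use centre_in_CWs_loc[OF assms(4,5)] in \<open>simp add: S_def\<close>)
  then have "a \<in> X"
    using upper_limit_subset[of X S, OF compact_imp_closed[OF X(1)] SX] by blast
  have "eventually (\<lambda>i. \<forall>s\<in>S i. dist (ipow X f m s) (ipow X f m ((f ^^ r i) x)) \<le> \<epsilon>) sequentially"
    unfolding eventually_sequentially S_def
  proof (intro exI allI impI ballI)
    fix i s assume "nat \<bar>m\<bar> \<le> i" "s \<in> (f ^^ r i) ` CWs_loc X f \<epsilon> x"
    moreover have "0 \<le> int (r i) + m"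
      using seq_suble[OF r, of i] \<open>nat \<bar>m\<bar> \<le> i\<close> by linarith
    ultimately show "dist (ipow X f m s) (ipow X f m ((f ^^ r i) x)) \<le> \<epsilon>"
      using dist_ipow_funpow_CWs_loc[OF X(3)] by blast
  qed
  then have "ipow X f m ` upper_limit S \<subseteq> cball (ipow X f m a) \<epsilon>"
    using upper_limit_dist_le[OF compact_imp_closed[OF X(1)] continuous_on_ipow[OF X] SX _ a \<open>a \<in> X\<close>]
      funpow_in[OF fX \<open>x \<in> X\<close>] by (fastforce simp: dist_commute)
  then show ?thesis
    unfolding S_def using assms(5) by (rule diameter_le_two_radius)
qed

lemma CWs_loc_subset_Ws:
  assumes X: "compact X" "continuous_on X f" "bij_betw f X X"
    and cw: "cw_expansive X f \<alpha>" and "\<epsilon> < \<alpha> / 2"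
  shows "CWs_loc X f \<epsilon> x \<subseteq> Ws X f x"
proof
  let ?C = "CWs_loc X f \<epsilon> x"
  fix y assume y: "y \<in> ?C"
  have fX: "f ` X \<subseteq> X"
    using X(3) by (simp add: bij_betw_def)
  have x: "x \<in> ?C"
    using centre_in_CWs_loc_if_nonempty[OF y] .
  have "x \<in> X" "y \<in> X"
    using x y CWs_loc_subset by blast+
  show "y \<in> Ws X f x"
  proof (rule ccontr)
    assume "y \<notin> Ws X f x"
    then obtain r a b where r: "strict_mono r" and a: "(\<lambda>i. (f ^^ r i) x) \<longlonglongrightarrow> a"
      and b: "(\<lambda>i. (f ^^ r i) y) \<longlonglongrightarrow> b" and "a \<noteq> b"
      using not_in_Ws_convergent_subseqE[OF X(1) fX \<open>x \<in> X\<close> \<open>y \<in> X\<close>] by blast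
    define S where "S i = (f ^^ r i) ` ?C" for i
    have SX: "S i \<subseteq> X" for i
      using CWs_loc_subset funpow_in[OF fX] by (fastforce simp: S_def)
    have Sc: "connected (S i)" for i
      unfolding S_def
      by (rule connected_continuous_image[OF continuous_on_subset[OF continuous_on_funpow[OF X(2) fX]
            CWs_loc_subset]]) (simp add: CWs_loc_def)
    have Sx: "(f ^^ r i) x \<in> S i" for i
      using x by (simp add: S_def)
    have ab: "a \<in> upper_limit S" "b \<in> upper_limit S"
      by (rule LIMSEQ_in_upper_limit[OF strict_mono_id _ a] LIMSEQ_in_upper_limit[OF strict_mono_id _ b];
          use x y in \<open>simp add: S_def\<close>)+
    then have "continuum (upper_limit S)"
      using compact_upper_limit[of X S, OF X(1) SX] connected_upper_limit[OF X(1) SX Sc Sx a]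
      unfolding continuum_def by blast
    moreover have "upper_limit S \<subseteq> X"
      using upper_limit_subset[of X S, OF compact_imp_closed[OF X(1)] SX] .
    ultimately obtain m :: int where "diameter (ipow X f m ` upper_limit S) > \<alpha>"
      using cw ab \<open>a \<noteq> b\<close> unfolding cw_expansive_def by blast
    moreover have "diameter (ipow X f m ` upper_limit S) \<le> 2 * \<epsilon>"
      unfolding S_def
      by (rule diameter_ipow_upper_limit_le[OF X \<open>x \<in> X\<close> CWs_loc_radius_nonneg[OF y] r a])
    ultimately show False
      using assms(5) by simp
  qed
qed

theorem mainTheorem4:
  fixes X :: "'a::metric_space set" and f :: "'a \<Rightarrow> 'a" and \<alpha> \<epsilon> :: real
    and N n :: nat and x :: 'a
  assumes "compact X"
    and "continuous_on X f" and "bij_betw f X X"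
    and "cw_expansive X f \<alpha>"
    and "0 < \<epsilon>" and "\<epsilon> < \<alpha> / 2"
    and "N > 0"
    and "\<forall>C. C \<subseteq> X \<and> continuum C \<and> diameter C \<ge> \<epsilon> \<longrightarrow>
           (\<exists>m::int. \<bar>m\<bar> \<le> int N \<and> diameter (ipow X f m ` C) > \<alpha>)"
    and "x \<in> X" and "n \<ge> N"
  shows "(f ^^ n) ` CWs_loc X f (\<alpha> / 2) x \<subseteq> CWs_loc X f \<epsilon> ((f ^^ n) x)
       \<and> CWs_loc X f \<epsilon> x \<subseteq> Ws X f x
       \<and> CWs_loc X f \<epsilon> x =
           connected_component_set (Ws_loc X f (\<alpha> / 2) x \<inter> Ws_fin X f \<epsilon> n x) x"
proof -
  have N: "expansion_time X f \<alpha> \<epsilon> N"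
    using assms(8) by (simp add: expansion_time_def)
  have "0 \<le> \<alpha>"
    using assms(4) by (simp add: cw_expansive_def)
  have "(f ^^ n) ` CWs_loc X f (\<alpha> / 2) x \<subseteq> CWs_loc X f \<epsilon> ((f ^^ n) x)"
    using funpow_image_CWs_loc_subset[OF assms(1-3) N assms(10,9) \<open>0 \<le> \<alpha>\<close>] .
  moreover have "CWs_loc X f \<epsilon> x \<subseteq> Ws X f x"
    using CWs_loc_subset_Ws[OF assms(1-4,6)] .
  moreover have "CWs_loc X f \<epsilon> x =
      connected_component_set (Ws_loc X f (\<alpha> / 2) x \<inter> Ws_fin X f \<epsilon> n x) x"
    using CWs_loc_eq_connected_component_Ws_fin[OF assms(1-3) N assms(10)] assms(6) by simp
  ultimately show ?thesis
    by blast
qed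

end
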